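(* Let $m \geq 2$ be an integer and let $p=(p_1,\dots,p_m)$ be a probability distribution on $\{1,\dots,m\}$. Throw balls one at a time independently into $m$ bins, each ball landing in bin $i$ with probability $p_i$. Let $k \geq 1$ be an integer and let $T_k$ be the number of balls thrown until some bin first contains $k$ balls. Define $n^* = \frac{k}{\|p\|_k}$, where $\|p\|_k = \left(\sum_{i=1}^m p_i^k\right)^{1/k}$. Then for every $\delta \in (0,1)$: \[ \Pr\left[T_k \leq \left(\tfrac{\delta}{e}\right) n^*\right] \leq \delta \] and \[ \Pr\left[T_k \leq \max\left\{e^2,\ 2\ln(\tfrac{1}{\delta})\right\} n^*\right] \geq 1-\delta. \]
   Context: Equivalently, $T_k$ is the smallest $n$ such that after $n$ balls the maximum load over all bins is at least $k$. *)

theory Defs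
  imports "HOL-Probability.Probability"
begin

definition load :: "nat stream \<Rightarrow> nat \<Rightarrow> nat \<Rightarrow> nat" where
  "load \<omega> n i = card {j. j < n \<and> \<omega> !! j = i}"

text \<open>T_k: the smallest n such that after n balls some bin contains at least k balls
  (infinity if this never happens).\<close>
definition hit_time :: "nat \<Rightarrow> nat stream \<Rightarrow> enat" where
  "hit_time k \<omega> = (INF n \<in> {n. \<exists>i. k \<le> load \<omega> n i}. enat n)"

abbreviation throws :: "nat pmf \<Rightarrow> nat stream measure" where
  "throws p \<equiv> stream_space (measure_pmf p)"

end

theory Submission
  imports Defs
begin

text \<open>
  Lower tail: by a union bound, bin \<open>i\<close> receives \<open>k\<close> of the first \<open>N\<close> balls with probability at
  most \<open>(N * p i) ^ k / k!\<close>, and \<open>k ^ k / k! \<le> e ^ k\<close> turns the sum over bins into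
  \<open>(e * N * \<parallel>p\<parallel>\<^sub>k / k) ^ k\<close>.

  Upper tail: by Poissonization, weighting the probability that all loads after \<open>j\<close> balls stay
  below \<open>k\<close> by \<open>x ^ j / j!\<close> and summing gives at most \<open>e ^ x\<close> times the product over bins of
  \<open>P[Poisson(p i * x) < k]\<close>. Since the survival probability decreases in \<open>j\<close>, taking
  \<open>x = 3 (N + 1) / 4\<close> bounds the survival after \<open>N\<close> balls by four times that product. For fixed
  \<open>\<parallel>p\<parallel>\<^sub>k\<close> the product is largest when all mass sits in a single bin, which leaves
  \<open>4 * P[Poisson(k * R) < k]\<close> with \<open>R = x * \<parallel>p\<parallel>\<^sub>k / k\<close>; this is at most \<open>exp (- 2 R / 3)\<close>.
\<close>

section \<open>Loads and the hitting time\<close>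

lemma load_conv_filter: "load \<omega> n i = length (filter ((=) i) (stake n \<omega>))"
  unfolding load_def length_filter_conv_card by (auto intro!: arg_cong[where f = card])

lemma load_0 [simp]: "load \<omega> 0 i = 0"
  by (simp add: load_def)

lemma load_Suc: "load \<omega> (Suc n) i = load \<omega> n i + (if \<omega> !! n = i then 1 else 0)"
  unfolding load_conv_filter stake_Suc by simp

lemma load_SCons_Suc: "load (t ## \<omega>) (Suc n) = (\<lambda>i. (if t = i then 1 else 0) + load \<omega> n i)"
  by (simp add: load_conv_filter fun_eq_iff)

lemma load_mono: "n \<le> n' \<Longrightarrow> load \<omega> n i \<le> load \<omega> n' i"
  by (induction n' rule: dec_induct) (auto simp: load_Suc)

lemma prob_space_throws: "prob_space (throws p)"
  by (rule prob_space.prob_space_stream_space) (rule prob_space_measure_pmf)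

lemma space_throws [simp]: "space (throws p) = UNIV"
  by (simp add: space_stream_space)

lemma sets_throws_load:
  "{\<omega> \<in> space (throws p). Q (load \<omega> n)} \<in> sets (throws p)"
proof -
  have stake: "stake n \<in> measurable (throws p) (count_space UNIV)"
    using measurable_stake[of n] by (simp add: measurable_cong_sets sets_stream_space_cong)
  have "{\<omega> \<in> space (throws p). Q (load \<omega> n)}
      = stake n -` {xs. Q (\<lambda>i. length (filter ((=) i) xs))} \<inter> space (throws p)"
    by (auto simp: load_conv_filter[abs_def])
  also have "\<dots> \<in> sets (throws p)"
    using stake by (rule measurable_sets) simp
  finally show ?thesis .
qed

lemma measure_throws_load_Suc:
  assumes "finite A" "set_pmf p \<subseteq> A"
  shows "measure (throws p) {\<omega> \<in> space (throws p). Q (load \<omega> (Suc n))}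
       = (\<Sum>t\<in>A. pmf p t * measure (throws p)
            {\<omega> \<in> space (throws p). Q (\<lambda>i. (if t = i then 1 else 0) + load \<omega> n i)})"
proof -
  let ?M = "\<lambda>t. measure (throws p) {\<omega> \<in> space (throws p). Q (\<lambda>i. (if t = i then 1 else 0) + load \<omega> n i)}"
  have "ennreal (measure (throws p) {\<omega> \<in> space (throws p). Q (load \<omega> (Suc n))})
      = (\<integral>\<^sup>+t. ennreal (?M t) \<partial>measure_pmf p)"
    unfolding load_SCons_Suc[symmetric]
    by (rule prob_space.prob_stream_space[OF prob_space_measure_pmf sets_throws_load])
  also have "\<dots> = (\<Sum>t\<in>A. ennreal (?M t) * pmf p t)"
    using assms by (intro nn_integral_measure_pmf_support) auto
  also have "\<dots> = ennreal (\<Sum>t\<in>A. pmf p t * ?M t)"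
    by (subst sum_ennreal[symmetric]) (auto simp: ennreal_mult' mult.commute)
  finally show ?thesis
    by (subst (asm) ennreal_inj) (auto intro!: sum_nonneg)
qed

lemma INF_enat_eq_Least:
  assumes "S \<noteq> {}"
  shows "(INF n\<in>S. enat n) = enat (LEAST n. n \<in> S)"
proof (rule antisym)
  show "(INF n\<in>S. enat n) \<le> enat (LEAST n. n \<in> S)"
    using assms by (intro INF_lower) (auto intro: LeastI)
  show "enat (LEAST n. n \<in> S) \<le> (INF n\<in>S. enat n)"
    by (rule INF_greatest) (simp add: Least_le)
qed

lemma hit_time_le_iff:
  assumes "0 \<le> a"
  shows "(\<exists>n. hit_time k \<omega> = enat n \<and> real n \<le> a) \<longleftrightarrow> (\<exists>i. k \<le> load \<omega> (nat \<lfloor>a\<rfloor>) i)"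
proof -
  define S where "S = {n. \<exists>i. k \<le> load \<omega> n i}"
  have hit_time: "hit_time k \<omega> = (INF n\<in>S. enat n)"
    by (simp add: hit_time_def S_def)
  have S_up: "n' \<in> S" if "n \<in> S" "n \<le> n'" for n n'
    using that load_mono[of n n' \<omega>] unfolding S_def by (blast intro: order_trans)
  show ?thesis
  proof
    assume "\<exists>n. hit_time k \<omega> = enat n \<and> real n \<le> a"
    then obtain n where n: "hit_time k \<omega> = enat n" "real n \<le> a"
      by auto
    then have "S \<noteq> {}"
      by (auto simp: hit_time top_enat_def)
    with n have "n \<in> S"
      by (simp add: hit_time INF_enat_eq_Least) (metis LeastI ex_in_conv)
    moreover have "n \<le> nat \<lfloor>a\<rfloor>"
      using n(2) by (simp add: le_nat_floor)
    ultimately show "\<exists>i. k \<le> load \<omega> (nat \<lfloor>a\<rfloor>) i"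
      using S_up by (simp add: S_def)
  next
    assume "\<exists>i. k \<le> load \<omega> (nat \<lfloor>a\<rfloor>) i"
    then have floor_in: "nat \<lfloor>a\<rfloor> \<in> S"
      by (simp add: S_def)
    then have "real (LEAST n. n \<in> S) \<le> a"
      using Least_le[of "\<lambda>n. n \<in> S", OF floor_in] assms by linarith
    then show "\<exists>n. hit_time k \<omega> = enat n \<and> real n \<le> a"
      using floor_in INF_enat_eq_Least[of S] by (auto simp: hit_time)
  qed
qed

section \<open>Truncated exponential series\<close>

definition trunc_exp :: "nat \<Rightarrow> real \<Rightarrow> real" where
  "trunc_exp r u = (\<Sum>j<r. u ^ j / fact j)"

lemma trunc_exp_0 [simp]: "trunc_exp 0 u = 0"
  by (simp add: trunc_exp_def)

lemma trunc_exp_Suc: "trunc_exp (Suc r) u = trunc_exp r u + u ^ r / fact r"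
  by (simp add: trunc_exp_def)

lemma trunc_exp_at_0: "trunc_exp r 0 = (if r = 0 then 0 else 1)"
  by (induction r) (auto simp: trunc_exp_Suc)

lemma trunc_exp_nonneg: "0 \<le> u \<Longrightarrow> 0 \<le> trunc_exp r u"
  by (simp add: trunc_exp_def sum_nonneg)

lemma trunc_exp_Suc_ge_1: "0 \<le> u \<Longrightarrow> 1 \<le> trunc_exp (Suc r) u"
  by (induction r) (auto simp: trunc_exp_Suc intro: order_trans)

lemma trunc_exp_le_exp: "0 \<le> u \<Longrightarrow> trunc_exp r u \<le> exp u"
  using summable_exp_generic[of u]
  by (auto simp: trunc_exp_def exp_def divide_inverse ac_simps intro!: sum_le_suminf)

lemma trunc_exp_le_4_power: "0 \<le> u \<Longrightarrow> trunc_exp (Suc r) u \<le> 4 ^ r * exp (u / 4)"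
proof -
  assume u: "0 \<le> u"
  have "trunc_exp (Suc r) u = (\<Sum>j<Suc r. 4 ^ j * ((u / 4) ^ j / fact j))"
    unfolding trunc_exp_def by (intro sum.cong refl) (simp add: power_divide)
  also have "\<dots> \<le> (\<Sum>j<Suc r. 4 ^ r * ((u / 4) ^ j / fact j))"
    using u by (intro sum_mono mult_right_mono power_increasing) auto
  also have "\<dots> = 4 ^ r * trunc_exp (Suc r) (u / 4)"
    unfolding trunc_exp_def by (simp add: sum_distrib_left del: sum.lessThan_Suc)
  also have "\<dots> \<le> 4 ^ r * exp (u / 4)"
    using u by (intro mult_left_mono trunc_exp_le_exp) auto
  finally show ?thesis .
qed

lemma exp_mult_le_trunc_exp:
  assumes "0 \<le> x"
  shows "exp x * (1 - x / (real N + 1)) \<le> trunc_exp (Suc N) x"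
proof -
  define f where "f n = x ^ n / fact n" for n
  have summable: "summable f" and exp: "exp x = suminf f"
    using exp_converges[of x] by (auto simp: sums_iff divide_inverse_commute f_def[abs_def])
  have f_nonneg: "0 \<le> f n" for n
    using assms by (simp add: f_def)
  have summable_N: "summable (\<lambda>n. f (n + N))" and summable_SN: "summable (\<lambda>n. f (n + Suc N))"
    using summable by (subst summable_iff_shift, assumption)+
  have tail_N: "(\<Sum>n. f (n + N)) \<le> exp x"
    using suminf_split_initial_segment[OF summable, of N] exp sum_nonneg[of "{..<N}" f, OF f_nonneg]
    by linarith
  have "f (n + Suc N) \<le> x / (real N + 1) * f (n + N)" for n
  proof -
    have "f (n + Suc N) = x / real (Suc (n + N)) * f (n + N)"
      by (simp add: f_def fact_Suc field_simps del: of_nat_Suc)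
    also have "\<dots> \<le> x / (real N + 1) * f (n + N)"
      using assms f_nonneg by (intro mult_right_mono divide_left_mono) auto
    finally show ?thesis .
  qed
  then have "(\<Sum>n. f (n + Suc N)) \<le> x / (real N + 1) * (\<Sum>n. f (n + N))"
    using summable_N summable_SN by (subst suminf_mult[symmetric]) (auto intro!: suminf_le summable_mult)
  also have "\<dots> \<le> x / (real N + 1) * exp x"
    using tail_N assms by (intro mult_left_mono) auto
  finally show ?thesis
    using suminf_split_initial_segment[OF summable, of "Suc N"] exp
    by (simp add: trunc_exp_def f_def algebra_simps)
qed

lemma power_self_div_fact_le_exp: "real k ^ k / fact k \<le> exp (real k)"
proof -
  have "real k ^ k / fact k \<le> trunc_exp (Suc k) (real k)"
    by (simp add: trunc_exp_Suc trunc_exp_nonneg)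
  also have "\<dots> \<le> exp (real k)"
    by (simp add: trunc_exp_le_exp)
  finally show ?thesis .
qed

lemma four_le_exp_7_div_4: "4 \<le> exp (7 / 4 :: real)"
proof -
  have "4 \<le> trunc_exp 3 (7 / 4)"
    by (simp add: trunc_exp_def eval_nat_numeral)
  also have "\<dots> \<le> exp (7 / 4)"
    by (simp add: trunc_exp_le_exp)
  finally show ?thesis .
qed

lemma seven_le_exp_2: "7 \<le> exp (2 :: real)"
  using trunc_exp_le_exp[of 2 5] by (simp add: trunc_exp_def eval_nat_numeral fact_numeral)

section \<open>The union bound\<close>

lemma power_Suc_ge_two_terms:
  fixes x :: real
  assumes "0 \<le> x"
  shows "x ^ Suc j + real (Suc j) * x ^ j \<le> (x + 1) ^ Suc j"
proof (induction j)
  case (Suc j)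
  have "x ^ Suc (Suc j) + real (Suc (Suc j)) * x ^ Suc j
      \<le> (x + 1) * (x ^ Suc j + real (Suc j) * x ^ j)"
    using assms by (simp add: algebra_simps)
  also have "\<dots> \<le> (x + 1) ^ Suc (Suc j)"
    using Suc assms by (simp add: mult_left_mono)
  finally show ?case .
qed simp

lemma poisson_bound_step:
  fixes q :: real
  assumes "0 \<le> q" "q \<le> 1"
  shows "q * (real N ^ r / fact r * q ^ r) + (1 - q) * (real N ^ Suc r / fact (Suc r) * q ^ Suc r)
       \<le> real (Suc N) ^ Suc r / fact (Suc r) * q ^ Suc r"
proof -
  have "q * (real N ^ r / fact r * q ^ r) + (1 - q) * (real N ^ Suc r / fact (Suc r) * q ^ Suc r)
      = q ^ Suc r / fact (Suc r) * (real (Suc r) * real N ^ r + (1 - q) * real N ^ Suc r)"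
    by (simp add: field_simps fact_Suc del: of_nat_Suc)
  also have "\<dots> \<le> q ^ Suc r / fact (Suc r) * (real N ^ Suc r + real (Suc r) * real N ^ r)"
    using assms by (intro mult_left_mono) (auto simp: mult_left_le_one_le)
  also have "\<dots> \<le> q ^ Suc r / fact (Suc r) * real (Suc N) ^ Suc r"
    using power_Suc_ge_two_terms[of "real N" r] assms by (intro mult_left_mono) (auto simp: add.commute)
  finally show ?thesis
    by (simp add: field_simps)
qed

lemma sum_pmf_mult_if:
  assumes "finite A" "set_pmf p \<subseteq> A"
  shows "(\<Sum>t\<in>A. pmf p t * (if t = i then a else b)) = pmf p i * a + (1 - pmf p i) * b"
proof -
  have "(\<Sum>t\<in>A. pmf p t * (if t = i then a else b))
      = (\<Sum>t\<in>A. pmf p t) * b + (\<Sum>t\<in>A. if t = i then pmf p i * (a - b) else 0)"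
    unfolding sum_distrib_right sum.distrib[symmetric] by (intro sum.cong) (auto simp: algebra_simps)
  also have "\<dots> = pmf p i * a + (1 - pmf p i) * b"
    using assms by (auto simp: sum_pmf_eq_1 algebra_simps set_pmf_iff)
  finally show ?thesis .
qed

text \<open>The offset \<open>l\<close> is an initial load of bin \<open>i\<close>, which the first ball raises with probability
  \<open>pmf p i\<close>; this is what lets the induction on the number of balls go through.\<close>

lemma prob_load_ge_le:
  assumes "finite A" "set_pmf p \<subseteq> A"
  shows "measure (throws p) {\<omega> \<in> space (throws p). k \<le> l + load \<omega> N i}
       \<le> real N ^ (k - l) / fact (k - l) * pmf p i ^ (k - l)"
proof (induction N arbitrary: l)
  case 0
  interpret prob_space "throws p"
    by (rule prob_space_throws)
  show ?case
    by (cases "k \<le> l") auto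
next
  case (Suc N)
  define M where "M l' = measure (throws p) {\<omega> \<in> space (throws p). k \<le> l' + load \<omega> N i}" for l'
  define B where "B n l' = real n ^ (k - l') / fact (k - l') * pmf p i ^ (k - l')" for n l'
  have first_ball: "measure (throws p) {\<omega> \<in> space (throws p). k \<le> l + ((if t = i then 1 else 0) + load \<omega> N i)}
      = (if t = i then M (Suc l) else M l)" for t
    by (cases "t = i") (simp_all add: M_def)
  have "measure (throws p) {\<omega> \<in> space (throws p). k \<le> l + load \<omega> (Suc N) i}
      = (\<Sum>t\<in>A. pmf p t * (if t = i then M (Suc l) else M l))"
    using measure_throws_load_Suc[OF assms, of "\<lambda>L. k \<le> l + L i" N] by (simp only: first_ball)
  also have "\<dots> = pmf p i * M (Suc l) + (1 - pmf p i) * M l"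
    by (rule sum_pmf_mult_if[OF assms])
  also have "\<dots> \<le> pmf p i * B N (Suc l) + (1 - pmf p i) * B N l"
    unfolding M_def B_def by (intro add_mono mult_left_mono Suc.IH) (simp_all add: pmf_le_1)
  also have "\<dots> \<le> B (Suc N) l"
  proof (cases "l < k")
    case True
    then obtain r where "k - l = Suc r" "k - Suc l = r"
      by (metis Suc_diff_Suc)
    then show ?thesis
      using poisson_bound_step[of "pmf p i" N r] by (simp add: B_def pmf_le_1)
  qed (simp add: B_def)
  finally show ?case
    by (simp add: B_def)
qed

lemma prob_max_load_ge_le:
  assumes "finite A" "set_pmf p \<subseteq> A" "1 \<le> k"
  shows "measure (throws p) {\<omega> \<in> space (throws p). \<exists>i. k \<le> load \<omega> N i}
       \<le> real N ^ k / fact k * (\<Sum>i\<in>A. pmf p i ^ k)"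
proof -
  interpret prob_space "throws p"
    by (rule prob_space_throws)
  define E where "E i = {\<omega> \<in> space (throws p). k \<le> load \<omega> N i}" for i
  have E_sets: "E i \<in> sets (throws p)" for i
    unfolding E_def by (rule sets_throws_load)
  have E_bound: "measure (throws p) (E i) \<le> real N ^ k / fact k * pmf p i ^ k" for i
    using prob_load_ge_le[OF assms(1,2), of k 0 N i] by (simp add: E_def)
  \<comment> \<open>the event ranges over all bins, so those outside the support are removed as a null set\<close>
  have "E i \<in> null_sets (throws p)" if "i \<notin> A" for i
  proof -
    have "pmf p i = 0"
      using that assms(2) by (auto simp: set_pmf_iff)
    then have "measure (throws p) (E i) = 0"
      using E_bound[of i] assms(3) by (simp add: measure_le_0_iff power_0_left)
    then show ?thesis
      using E_sets by (simp add: emeasure_eq_measure null_sets_def)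
  qed
  then have null: "(\<Union>i\<in>-A. E i) \<in> null_sets (throws p)"
    by (intro null_sets_UN') auto
  have "{\<omega> \<in> space (throws p). \<exists>i. k \<le> load \<omega> N i} = (\<Union>i\<in>A. E i) \<union> (\<Union>i\<in>-A. E i)"
    by (auto simp: E_def)
  then have "measure (throws p) {\<omega> \<in> space (throws p). \<exists>i. k \<le> load \<omega> N i}
      = measure (throws p) (\<Union>i\<in>A. E i)"
    using null assms(1) E_sets by (simp add: measure_Un_null_set sets.finite_UN)
  also have "\<dots> \<le> (\<Sum>i\<in>A. measure (throws p) (E i))"
    using assms(1) E_sets by (rule measure_UNION_le)
  also have "\<dots> \<le> (\<Sum>i\<in>A. real N ^ k / fact k * pmf p i ^ k)"
    by (intro sum_mono E_bound)
  finally show ?thesis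
    by (simp add: sum_distrib_left)
qed

section \<open>Poissonization\<close>

text \<open>As in \<open>prob_load_ge_le\<close>, \<open>L i\<close> is an initial load of bin \<open>i\<close>.\<close>

definition survival :: "nat pmf \<Rightarrow> nat set \<Rightarrow> nat \<Rightarrow> nat \<Rightarrow> (nat \<Rightarrow> nat) \<Rightarrow> real" where
  "survival p A k N L = measure (throws p) {\<omega> \<in> space (throws p). \<forall>i\<in>A. L i + load \<omega> N i < k}"

lemma survival_nonneg: "0 \<le> survival p A k N L"
  by (simp add: survival_def)

lemma survival_0: "survival p A k 0 L = (if \<forall>i\<in>A. L i < k then 1 else 0)"
proof -
  interpret prob_space "throws p"
    by (rule prob_space_throws)
  show ?thesis
    using prob_space by (auto simp: survival_def)
qed

lemma survival_Suc:
  assumes "finite A" "set_pmf p \<subseteq> A"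
  shows "survival p A k (Suc N) L = (\<Sum>t\<in>A. pmf p t * survival p A k N (L(t := Suc (L t))))"
proof -
  have "{\<omega> \<in> space (throws p). \<forall>i\<in>A. L i + ((if t = i then 1 else 0) + load \<omega> N i) < k}
      = {\<omega> \<in> space (throws p). \<forall>i\<in>A. (L(t := Suc (L t))) i + load \<omega> N i < k}" for t
    by (intro Collect_cong conj_cong refl ball_cong) auto
  then show ?thesis
    unfolding survival_def
    using measure_throws_load_Suc[OF assms, of "\<lambda>L'. \<forall>i\<in>A. L i + L' i < k" N] by simp
qed

lemma survival_antimono:
  assumes "N \<le> N'"
  shows "survival p A k N' L \<le> survival p A k N L"
proof -
  interpret prob_space "throws p"
    by (rule prob_space_throws)
  have "L i + load \<omega> N i < k" if "L i + load \<omega> N' i < k" for \<omega> i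
    using load_mono[OF assms, of \<omega> i] that by linarith
  then show ?thesis
    unfolding survival_def by (intro finite_measure_mono sets_throws_load) auto
qed

lemma trunc_exp_has_real_derivative: "(trunc_exp r has_real_derivative trunc_exp (r - 1) u) (at u)"
proof (induction r)
  case 0
  then show ?case
    by (simp add: trunc_exp_def[abs_def])
next
  case (Suc r)
  have "trunc_exp (r - 1) u + real r * u ^ (r - 1) / fact r = trunc_exp r u"
    by (cases r) (simp_all add: trunc_exp_Suc fact_Suc del: of_nat_Suc)
  moreover have "((\<lambda>u. trunc_exp r u + u ^ r / fact r) has_real_derivative
      trunc_exp (r - 1) u + real r * u ^ (r - 1) / fact r) (at u)"
    by (auto intro!: derivative_eq_intros Suc)
  ultimately show ?case
    by (simp add: trunc_exp_Suc[abs_def])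
qed

lemma prod_trunc_exp_has_real_derivative:
  assumes "finite A"
  shows "((\<lambda>y. \<Prod>i\<in>A. trunc_exp (k - L i) (c i * y)) has_real_derivative
          (\<Sum>t\<in>A. c t * (\<Prod>i\<in>A. trunc_exp (k - (L(t := Suc (L t))) i) (c i * y)))) (at y)"
proof -
  have chain: "((\<lambda>y. trunc_exp r (c * y)) has_real_derivative trunc_exp (r - 1) (c * y) * c) (at y)" for r c
    by (rule DERIV_chain2[OF trunc_exp_has_real_derivative]) (auto intro!: derivative_eq_intros)
  have shift: "trunc_exp (k - L t - 1) (c t * y) * (\<Prod>i\<in>A - {t}. trunc_exp (k - L i) (c i * y))
      = (\<Prod>i\<in>A. trunc_exp (k - (L(t := Suc (L t))) i) (c i * y))" if "t \<in> A" for t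
    by (subst prod.remove[OF assms that]) (auto intro!: prod.cong)
  have "((\<lambda>y. \<Prod>i\<in>A. trunc_exp (k - L i) (c i * y)) has_real_derivative
      (\<Sum>t\<in>A. trunc_exp (k - L t - 1) (c t * y) * c t * (\<Prod>i\<in>A - {t}. trunc_exp (k - L i) (c i * y)))) (at y)"
    by (rule has_field_derivative_prod) (rule chain)
  then show ?thesis
    using shift by (simp add: mult_ac cong: sum.cong)
qed

lemma prod_trunc_exp_at_0:
  assumes "finite A"
  shows "(\<Prod>i\<in>A. trunc_exp (k - L i) 0) = (if \<forall>i\<in>A. L i < k then 1 else 0)"
proof (cases "\<forall>i\<in>A. L i < k")
  case False
  then obtain i where "i \<in> A" "k \<le> L i"
    by (auto simp: not_less)
  with assms show ?thesis
    by (auto simp: trunc_exp_at_0 intro!: prod_zero bexI[of _ i])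
qed (auto simp: trunc_exp_at_0 intro!: prod.neutral)

lemma sum_power_div_fact_has_real_derivative:
  "((\<lambda>y. \<Sum>j\<le>N. y ^ j / fact j * a j) has_real_derivative (\<Sum>j<N. y ^ j / fact j * a (Suc j))) (at y)"
proof -
  have "((\<lambda>y. \<Sum>j\<le>N. y ^ j / fact j * a j) has_real_derivative
      (\<Sum>j\<le>N. real j * y ^ (j - 1) / fact j * a j)) (at y)"
    by (auto intro!: derivative_eq_intros)
  moreover have "(\<Sum>j\<le>N. real j * y ^ (j - 1) / fact j * a j) = (\<Sum>j<N. y ^ j / fact j * a (Suc j))"
    by (subst sum.atMost_shift) (simp add: fact_Suc del: of_nat_Suc)
  ultimately show ?thesis
    by simp
qed

lemma has_real_derivative_le_imp_le:
  fixes f g :: "real \<Rightarrow> real"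
  assumes "a \<le> x" "f a \<le> g a"
    and "\<And>y. a \<le> y \<Longrightarrow> (f has_real_derivative f' y) (at y)"
    and "\<And>y. a \<le> y \<Longrightarrow> (g has_real_derivative g' y) (at y)"
    and "\<And>y. a \<le> y \<Longrightarrow> f' y \<le> g' y"
  shows "f x \<le> g x"
proof -
  have "g a - f a \<le> g x - f x"
    using assms(1)
  proof (rule DERIV_nonneg_imp_nondecreasing)
    fix y
    assume "a \<le> y"
    then show "\<exists>d. ((\<lambda>y. g y - f y) has_real_derivative d) (at y) \<and> 0 \<le> d"
      using assms(3-5) by (intro exI[of _ "g' y - f' y"]) (auto intro: DERIV_diff)
  qed
  with assms(2) show ?thesis
    by simp
qed

text \<open>With Poisson(\<open>x\<close>) many balls the loads are independent Poisson(\<open>pmf p i * x\<close>), so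
  \<open>exp (- x)\<close> times the right side is the probability that every bin \<open>i\<close> stays below \<open>k - L i\<close>,
  and \<open>exp (- x)\<close> times the left side is a partial sum of the same probability split by the number
  of balls. The proof compares derivatives in \<open>x\<close>: both sides agree at \<open>0\<close>, and by the first-ball
  recursion differentiating either side averages it over a raised initial load.\<close>

lemma egf_survival_le_prod_trunc_exp:
  assumes A: "finite A" "set_pmf p \<subseteq> A" and "0 \<le> x"
  shows "(\<Sum>j\<le>N. x ^ j / fact j * survival p A k j L) \<le> (\<Prod>i\<in>A. trunc_exp (k - L i) (pmf p i * x))"
proof -
  define S where "S N L y = (\<Sum>j\<le>N. y ^ j / fact j * survival p A k j L)" for N L y
  define P where "P L y = (\<Prod>i\<in>A. trunc_exp (k - L i) (pmf p i * y))" for L y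
  have P_nonneg: "0 \<le> P L y" if "0 \<le> y" for L y
    using that by (auto simp: P_def intro!: prod_nonneg trunc_exp_nonneg)
  have compare: "S N L x \<le> P L x"
    if "0 \<le> x"
      and "\<And>y. 0 \<le> y \<Longrightarrow> (\<Sum>j<N. y ^ j / fact j * survival p A k (Suc j) L)
                              \<le> (\<Sum>t\<in>A. pmf p t * P (L(t := Suc (L t))) y)"
    for N L x
    using that(1)
  proof (rule has_real_derivative_le_imp_le)
    show "S N L 0 \<le> P L 0"
      by (simp add: S_def P_def sum.atMost_shift survival_0 prod_trunc_exp_at_0[OF A(1)])
    show "(S N L has_real_derivative (\<Sum>j<N. y ^ j / fact j * survival p A k (Suc j) L)) (at y)" for y
      unfolding S_def[abs_def] by (rule sum_power_div_fact_has_real_derivative)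
    show "(P L has_real_derivative (\<Sum>t\<in>A. pmf p t * P (L(t := Suc (L t))) y)) (at y)" for y
      unfolding P_def[abs_def] by (rule prod_trunc_exp_has_real_derivative[OF A(1)])
  qed (use that(2) in auto)
  have "S N L x \<le> P L x"
    using assms(3)
  proof (induction N arbitrary: L x)
    case 0
    then show ?case
      by (intro compare) (auto intro!: sum_nonneg mult_nonneg_nonneg P_nonneg)
  next
    case (Suc N)
    show ?case
    proof (intro compare)
      fix y :: real
      assume "0 \<le> y"
      have "(\<Sum>j<Suc N. y ^ j / fact j * survival p A k (Suc j) L)
          = (\<Sum>t\<in>A. pmf p t * S N (L(t := Suc (L t))) y)"
        unfolding S_def survival_Suc[OF A] lessThan_Suc_atMost
        by (simp add: sum_distrib_left sum_distrib_right mult_ac sum.swap[of _ A])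
      also have "\<dots> \<le> (\<Sum>t\<in>A. pmf p t * P (L(t := Suc (L t))) y)"
        using Suc.IH[OF \<open>0 \<le> y\<close>] by (intro sum_mono mult_left_mono) auto
      finally show "(\<Sum>j<Suc N. y ^ j / fact j * survival p A k (Suc j) L)
          \<le> (\<Sum>t\<in>A. pmf p t * P (L(t := Suc (L t))) y)" .
    qed (use Suc.prems in auto)
  qed
  then show ?thesis
    by (simp add: S_def P_def)
qed

lemma survival_le_prod_trunc_exp:
  assumes "finite A" "set_pmf p \<subseteq> A" "0 \<le> x"
  shows "exp x * (1 - x / (real N + 1)) * survival p A k N (\<lambda>_. 0)
       \<le> (\<Prod>i\<in>A. trunc_exp k (pmf p i * x))"
proof -
  let ?F = "survival p A k N (\<lambda>_. 0)"
  have "exp x * (1 - x / (real N + 1)) * ?F \<le> trunc_exp (Suc N) x * ?F"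
    using exp_mult_le_trunc_exp[OF assms(3)] survival_nonneg by (rule mult_right_mono)
  also have "\<dots> = (\<Sum>j\<le>N. x ^ j / fact j * ?F)"
    by (simp add: trunc_exp_def lessThan_Suc_atMost sum_distrib_right)
  also have "\<dots> \<le> (\<Sum>j\<le>N. x ^ j / fact j * survival p A k j (\<lambda>_. 0))"
    using assms(3) by (intro sum_mono mult_left_mono survival_antimono) auto
  also have "\<dots> \<le> (\<Prod>i\<in>A. trunc_exp k (pmf p i * x))"
    using egf_survival_le_prod_trunc_exp[OF assms, where N = N and L = "\<lambda>_. 0"] by simp
  finally show ?thesis .
qed

section \<open>Splitting the Poisson rate\<close>

lemma neg_ln_trunc_exp_has_real_derivative:
  assumes "0 \<le> y"
  shows "((\<lambda>y. y - ln (trunc_exp (Suc k) y)) has_real_derivative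
           1 - trunc_exp k y / trunc_exp (Suc k) y) (at y)"
proof -
  have "0 < trunc_exp (Suc k) y"
    using trunc_exp_Suc_ge_1[OF assms, of k] by simp
  then have "((\<lambda>y. ln (trunc_exp (Suc k) y)) has_real_derivative
      1 / trunc_exp (Suc k) y * trunc_exp k y) (at y)"
    using trunc_exp_has_real_derivative[of "Suc k" y] by (intro DERIV_chain2[OF DERIV_ln_divide]) auto
  then show ?thesis
    using DERIV_diff[OF DERIV_ident] by fastforce
qed

lemma power_div_trunc_exp_le:
  assumes "0 \<le> u"
  shows "u ^ Suc k / fact (Suc k) / trunc_exp (Suc k) u \<le> u - ln (trunc_exp (Suc k) u)"
proof -
  have g_pos: "0 < trunc_exp (Suc k) y" if "0 \<le> y" for y
    using trunc_exp_Suc_ge_1[OF that, of k] by simp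
  have power_deriv: "((\<lambda>y. y ^ Suc k / fact (Suc k)) has_real_derivative y ^ k / fact k) (at y)" for y
  proof -
    have "((\<lambda>y. y ^ Suc k * (1 / fact (Suc k))) has_real_derivative
        real (Suc k) * y ^ k * (1 / fact (Suc k))) (at y)"
      by (rule DERIV_cmult_right) (use DERIV_pow[of "Suc k" y] in simp)
    then show ?thesis
      by (simp add: fact_Suc del: of_nat_Suc)
  qed
  have lhs_deriv: "((\<lambda>y. y ^ Suc k / fact (Suc k) / trunc_exp (Suc k) y) has_real_derivative
      (y ^ k / fact k * trunc_exp (Suc k) y - y ^ Suc k / fact (Suc k) * trunc_exp k y)
        / (trunc_exp (Suc k) y * trunc_exp (Suc k) y)) (at y)" if "0 \<le> y" for y
    using g_pos[OF that] trunc_exp_has_real_derivative[of "Suc k" y]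
    by (intro DERIV_divide power_deriv) auto
  have deriv_le: "(y ^ k / fact k * trunc_exp (Suc k) y - y ^ Suc k / fact (Suc k) * trunc_exp k y)
        / (trunc_exp (Suc k) y * trunc_exp (Suc k) y)
      \<le> 1 - trunc_exp k y / trunc_exp (Suc k) y" if "0 \<le> y" for y
  proof -
    define g where "g = trunc_exp (Suc k) y"
    have "0 < g"
      using g_pos[OF that] by (simp add: g_def)
    have m_eq: "y ^ k / fact k = g - trunc_exp k y"
      by (simp add: g_def trunc_exp_Suc)
    have "(y ^ k / fact k * g - y ^ Suc k / fact (Suc k) * trunc_exp k y) / (g * g) \<le> y ^ k / fact k * g / (g * g)"
      using that by (intro divide_right_mono) (auto intro!: divide_nonneg_nonneg mult_nonneg_nonneg trunc_exp_nonneg)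
    also have "\<dots> = 1 - trunc_exp k y / g"
      unfolding m_eq using \<open>0 < g\<close> by (simp add: field_simps)
    finally show ?thesis
      by (simp add: g_def)
  qed
  show ?thesis
    by (rule has_real_derivative_le_imp_le[OF assms _ lhs_deriv neg_ln_trunc_exp_has_real_derivative deriv_le])
      (simp add: trunc_exp_at_0)
qed

lemma neg_ln_trunc_exp_div_power_antimono:
  assumes "0 < a" "a \<le> b"
  shows "(b - ln (trunc_exp (Suc k) b)) * a ^ Suc k \<le> (a - ln (trunc_exp (Suc k) a)) * b ^ Suc k"
proof -
  define \<rho> where "\<rho> y = (y - ln (trunc_exp (Suc k) y)) / y ^ Suc k" for y
  have "\<rho> b \<le> \<rho> a"
    using assms(2)
  proof (rule DERIV_nonpos_imp_nonincreasing)
    fix y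
    assume "a \<le> y"
    with assms have "0 < y"
      by simp
    define g where "g = trunc_exp (Suc k) y"
    define \<phi> where "\<phi> = y - ln g"
    have "1 \<le> g"
      using trunc_exp_Suc_ge_1 \<open>0 < y\<close> by (simp add: g_def)
    have deriv: "(\<rho> has_real_derivative
        ((1 - trunc_exp k y / g) * y ^ Suc k - \<phi> * (real (Suc k) * y ^ k)) / (y ^ Suc k * y ^ Suc k)) (at y)"
      unfolding \<rho>_def[abs_def] \<phi>_def g_def using \<open>0 < y\<close> DERIV_pow[of "Suc k" y]
      by (intro DERIV_divide neg_ln_trunc_exp_has_real_derivative) auto
    have m_eq: "y ^ k / fact k = g - trunc_exp k y"
      by (simp add: g_def trunc_exp_Suc)
    have ratio: "1 - trunc_exp k y / g = y ^ k / fact k / g"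
      unfolding m_eq using \<open>1 \<le> g\<close> by (simp add: field_simps)
    have "g \<noteq> 0"
      using \<open>1 \<le> g\<close> by simp
    then have "(1 - trunc_exp k y / g) * y ^ Suc k - \<phi> * (real (Suc k) * y ^ k)
        = real (Suc k) * y ^ k * (y ^ Suc k / fact (Suc k) / g - \<phi>)"
      unfolding ratio by (simp add: field_simps fact_Suc del: of_nat_Suc)
    also have "\<dots> \<le> 0"
      using power_div_trunc_exp_le[of y k] \<open>0 < y\<close>
      by (intro mult_nonneg_nonpos) (auto simp: g_def \<phi>_def)
    finally show "\<exists>d. (\<rho> has_real_derivative d) (at y) \<and> d \<le> 0"
      using deriv by (intro exI conjI) (auto intro: divide_nonpos_nonneg)
  qed
  then show ?thesis
    using assms by (simp add: \<rho>_def divide_le_eq le_divide_eq mult.commute mult.left_commute)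
qed

text \<open>\<open>exp (- u) * trunc_exp (Suc k) u\<close> is the probability that a Poisson(\<open>u\<close>) variable is at most
  \<open>k\<close>. Since \<open>- ln\<close> of it divided by \<open>u ^ Suc k\<close> is nonincreasing, \<open>- ln\<close> of it is superadditive
  when the rates are combined in the \<open>Suc k\<close>-norm.\<close>

lemma prod_exp_trunc_exp_le:
  assumes "finite A" "\<And>i. i \<in> A \<Longrightarrow> 0 \<le> u i" "0 \<le> U"
    and norm: "U ^ Suc k = (\<Sum>i\<in>A. u i ^ Suc k)"
  shows "(\<Prod>i\<in>A. exp (- u i) * trunc_exp (Suc k) (u i)) \<le> exp (- U) * trunc_exp (Suc k) U"
proof -
  define \<phi> where "\<phi> y = y - ln (trunc_exp (Suc k) y)" for y
  have exp_\<phi>: "exp (- y) * trunc_exp (Suc k) y = exp (- \<phi> y)" if "0 \<le> y" for y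
    using trunc_exp_Suc_ge_1[OF that, of k] by (simp add: \<phi>_def exp_diff exp_minus field_simps)
  have u_le: "u i \<le> U" if "i \<in> A" for i
  proof -
    have "u i ^ Suc k \<le> U ^ Suc k"
      unfolding norm using that assms(1,2) by (intro member_le_sum) auto
    then show ?thesis
      using assms(3) by (rule power_le_imp_le_base)
  qed
  have superadd: "\<phi> U \<le> (\<Sum>i\<in>A. \<phi> (u i))"
  proof (cases "U = 0")
    case True
    then have "u i = 0" if "i \<in> A" for i
      using u_le[OF that] assms(2)[OF that] by simp
    with True show ?thesis
      by (simp add: \<phi>_def trunc_exp_at_0)
  next
    case False
    then have "0 < U"
      using assms(3) by simp
    have each: "\<phi> U * u i ^ Suc k \<le> \<phi> (u i) * U ^ Suc k" if "i \<in> A" for i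
    proof (cases "u i = 0")
      case False
      then show ?thesis
        unfolding \<phi>_def using assms(2)[OF that] u_le[OF that]
        by (intro neg_ln_trunc_exp_div_power_antimono) auto
    qed (use assms(3) in \<open>simp add: \<phi>_def trunc_exp_at_0\<close>)
    have "\<phi> U * U ^ Suc k = (\<Sum>i\<in>A. \<phi> U * u i ^ Suc k)"
      unfolding norm by (rule sum_distrib_left)
    also have "\<dots> \<le> (\<Sum>i\<in>A. \<phi> (u i) * U ^ Suc k)"
      using each by (rule sum_mono)
    also have "\<dots> = (\<Sum>i\<in>A. \<phi> (u i)) * U ^ Suc k"
      by (rule sum_distrib_right[symmetric])
    finally show ?thesis
      using \<open>0 < U\<close> by simp
  qed
  have "(\<Prod>i\<in>A. exp (- u i) * trunc_exp (Suc k) (u i)) = exp (- (\<Sum>i\<in>A. \<phi> (u i)))"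
    using assms(1,2) by (simp add: exp_\<phi> exp_sum sum_negf[symmetric])
  also have "\<dots> \<le> exp (- \<phi> U)"
    using superadd by simp
  also have "\<dots> = exp (- U) * trunc_exp (Suc k) U"
    using exp_\<phi>[OF assms(3)] by simp
  finally show ?thesis .
qed

lemma four_exp_mult_trunc_exp_le:
  assumes "1 \<le> k" "21 / 4 \<le> R"
  shows "4 * exp (- (real k * R)) * trunc_exp k (real k * R) \<le> exp (- (2 * R / 3))"
proof -
  have four: "4 \<le> exp (R / 3)"
    using four_le_exp_7_div_4 exp_le_cancel_iff[of "7 / 4" "R / 3"] assms(2) by linarith
  show ?thesis
  proof (cases "k = 1")
    case True
    have "4 * exp (- R) \<le> exp (R / 3) * exp (- R)"
      using four by simp
    then show ?thesis
      using True by (simp add: trunc_exp_def exp_add[symmetric])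
  next
    case False
    with assms(1) obtain r where k: "k = Suc r" and "1 \<le> r"
      by (cases k) auto
    have "4 * exp (- (real k * R)) * trunc_exp k (real k * R)
        \<le> 4 * exp (- (real k * R)) * (4 ^ r * exp (real k * R / 4))"
      using trunc_exp_le_4_power[of "real k * R" r] assms(2) k by (intro mult_left_mono) auto
    also have "\<dots> = 4 ^ k * exp (- (3 * real k * R / 4))"
      by (simp add: k exp_add[symmetric] field_simps)
    also have "\<dots> \<le> exp (R / 3) ^ k * exp (- (3 * real k * R / 4))"
      using four by (intro mult_right_mono power_mono) auto
    also have "\<dots> = exp (- (5 * real k * R / 12))"
      by (simp add: exp_of_nat_mult[symmetric] exp_add[symmetric] field_simps)
    also have "\<dots> \<le> exp (- (2 * R / 3))"
      using k \<open>1 \<le> r\<close> assms(2) by (simp add: field_simps)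
    finally show ?thesis .
  qed
qed

section \<open>Tail bounds for the hitting time\<close>

definition pmf_norm :: "nat pmf \<Rightarrow> nat \<Rightarrow> real" where
  "pmf_norm p k = (\<Sum>i\<in>set_pmf p. pmf p i ^ k) powr (1 / real k)"

lemma sum_pmf_power_pos:
  assumes "finite (set_pmf p)"
  shows "0 < (\<Sum>i\<in>set_pmf p. pmf p i ^ k)"
  using assms set_pmf_not_empty[of p] by (intro sum_pos) (auto simp: pmf_positive)

lemma pmf_norm_pos:
  assumes "finite (set_pmf p)"
  shows "0 < pmf_norm p k"
proof -
  have "(\<Sum>i\<in>set_pmf p. pmf p i ^ k) \<noteq> 0"
    using sum_pmf_power_pos[OF assms, of k] by simp
  then show ?thesis
    by (simp add: pmf_norm_def)
qed

lemma pmf_norm_power: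
  assumes "finite (set_pmf p)" "1 \<le> k"
  shows "pmf_norm p k ^ k = (\<Sum>i\<in>set_pmf p. pmf p i ^ k)"
  using sum_pmf_power_pos[OF assms(1), of k] assms(2)
  by (simp add: pmf_norm_def powr_realpow[symmetric] powr_powr)

lemma hit_time_lower_tail:
  assumes "finite (set_pmf p)" "1 \<le> k" "0 \<le> \<delta>"
  shows "measure (throws p) {\<omega> \<in> space (throws p).
           \<exists>n. hit_time k \<omega> = enat n \<and> real n \<le> \<delta> / exp 1 * (real k / pmf_norm p k)} \<le> \<delta> ^ k"
proof -
  define \<sigma> where "\<sigma> = pmf_norm p k"
  have "0 < \<sigma>"
    using pmf_norm_pos[OF assms(1)] by (simp add: \<sigma>_def)
  define N where "N = nat \<lfloor>\<delta> / exp 1 * (real k / \<sigma>)\<rfloor>"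
  have "real N \<le> \<delta> / exp 1 * (real k / \<sigma>)"
    using assms(3) \<open>0 < \<sigma>\<close> by (simp add: N_def)
  then have N_le: "exp 1 * real N * \<sigma> / real k \<le> \<delta>"
    using \<open>0 < \<sigma>\<close> assms(2) by (simp add: field_simps)
  have "measure (throws p) {\<omega> \<in> space (throws p).
          \<exists>n. hit_time k \<omega> = enat n \<and> real n \<le> \<delta> / exp 1 * (real k / \<sigma>)}
      = measure (throws p) {\<omega> \<in> space (throws p). \<exists>i. k \<le> load \<omega> N i}"
    using hit_time_le_iff[of "\<delta> / exp 1 * (real k / \<sigma>)" k] assms(3) \<open>0 < \<sigma>\<close>
    by (simp add: N_def)
  also have "\<dots> \<le> real N ^ k / fact k * \<sigma> ^ k"
    using prob_max_load_ge_le[OF assms(1) order_refl assms(2), of N] pmf_norm_power[OF assms(1,2)]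
    by (simp add: \<sigma>_def)
  also have "\<dots> = (real N / real k) ^ k * (real k ^ k / fact k) * \<sigma> ^ k"
    using assms(2) by (simp add: power_divide)
  also have "\<dots> \<le> (real N / real k) ^ k * exp (real k) * \<sigma> ^ k"
    using \<open>0 < \<sigma>\<close> by (intro mult_right_mono mult_left_mono power_self_div_fact_le_exp) auto
  also have "\<dots> = (exp 1 * real N * \<sigma> / real k) ^ k"
    by (simp add: power_mult_distrib exp_of_nat_mult[symmetric] power_divide field_simps)
  also have "\<dots> \<le> \<delta> ^ k"
    using N_le \<open>0 < \<sigma>\<close> by (intro power_mono) auto
  finally show ?thesis
    by (simp add: \<sigma>_def)
qed

lemma survival_le_trunc_exp_pmf_norm:
  fixes N :: nat
  assumes "finite (set_pmf p)" "1 \<le> k"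
  defines "U \<equiv> 3 * (real N + 1) / 4 * pmf_norm p k"
  shows "survival p (set_pmf p) k N (\<lambda>_. 0) \<le> 4 * exp (- U) * trunc_exp k U"
proof -
  define x where "x = 3 * (real N + 1) / 4"
  have "0 \<le> x"
    by (simp add: x_def)
  obtain r where k: "k = Suc r"
    using assms(2) by (cases k) auto
  have quarter: "exp x * (1 - x / (real N + 1)) = exp x / 4"
    by (simp add: x_def field_simps)
  have "exp x / 4 * survival p (set_pmf p) k N (\<lambda>_. 0) \<le> (\<Prod>i\<in>set_pmf p. trunc_exp k (pmf p i * x))"
    using survival_le_prod_trunc_exp[OF assms(1) order_refl \<open>0 \<le> x\<close>, of N k] by (simp only: quarter)
  also have "\<dots> = exp x * (\<Prod>i\<in>set_pmf p. exp (- (pmf p i * x)) * trunc_exp k (pmf p i * x))"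
    using assms(1) sum_pmf_eq_1[OF assms(1) order_refl]
    by (simp add: prod.distrib exp_sum[symmetric] sum_distrib_right[symmetric]
        sum_negf exp_minus_inverse mult.assoc[symmetric])
  also have "\<dots> \<le> exp x * (exp (- U) * trunc_exp k U)"
  proof (intro mult_left_mono)
    have U: "U = x * pmf_norm p k"
      by (simp add: U_def x_def)
    then have "U ^ k = x ^ k * pmf_norm p k ^ k"
      by (simp add: power_mult_distrib)
    also have "\<dots> = (\<Sum>i\<in>set_pmf p. (pmf p i * x) ^ k)"
      unfolding pmf_norm_power[OF assms(1,2)] by (simp add: sum_distrib_left power_mult_distrib mult.commute)
    finally have norm: "U ^ Suc r = (\<Sum>i\<in>set_pmf p. (pmf p i * x) ^ Suc r)"
      by (simp only: k)
    have "0 \<le> U"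
      unfolding U using \<open>0 \<le> x\<close> pmf_norm_pos[OF assms(1), of k] by simp
    then show "(\<Prod>i\<in>set_pmf p. exp (- (pmf p i * x)) * trunc_exp k (pmf p i * x)) \<le> exp (- U) * trunc_exp k U"
      unfolding k using assms(1) \<open>0 \<le> x\<close> norm by (intro prod_exp_trunc_exp_le) auto
  qed simp
  finally show ?thesis
    by (simp add: field_simps)
qed

lemma hit_time_upper_tail:
  assumes "finite (set_pmf p)" "1 \<le> k" "7 \<le> c"
  shows "1 - exp (- c / 2) \<le> measure (throws p) {\<omega> \<in> space (throws p).
           \<exists>n. hit_time k \<omega> = enat n \<and> real n \<le> c * (real k / pmf_norm p k)}"
proof -
  interpret prob_space "throws p"
    by (rule prob_space_throws)
  define \<sigma> where "\<sigma> = pmf_norm p k"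
  have "0 < \<sigma>"
    using pmf_norm_pos[OF assms(1)] by (simp add: \<sigma>_def)
  define N where "N = nat \<lfloor>c * (real k / \<sigma>)\<rfloor>"
  define R where "R = 3 * (real N + 1) / 4 * \<sigma> / real k"
  have "c * (real k / \<sigma>) \<le> real N + 1"
    unfolding N_def by linarith
  then have R_ge: "3 * c / 4 \<le> R"
    using \<open>0 < \<sigma>\<close> assms(2) by (simp add: R_def field_simps)
  define F where "F = survival p (set_pmf p) k N (\<lambda>_. 0)"
  have "F \<le> 4 * exp (- (real k * R)) * trunc_exp k (real k * R)"
    using survival_le_trunc_exp_pmf_norm[OF assms(1,2), of N] assms(2)
    by (simp add: F_def R_def \<sigma>_def)
  also have "\<dots> \<le> exp (- (2 * R / 3))"
    using R_ge assms by (intro four_exp_mult_trunc_exp_le) auto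
  also have "\<dots> \<le> exp (- c / 2)"
    using R_ge by simp
  finally have F_le: "F \<le> exp (- c / 2)" .
  have "1 - F = measure (throws p) (space (throws p) - {\<omega> \<in> space (throws p). \<forall>i\<in>set_pmf p. 0 + load \<omega> N i < k})"
    unfolding F_def survival_def by (rule prob_compl[symmetric]) (rule sets_throws_load)
  also have "\<dots> \<le> measure (throws p) {\<omega> \<in> space (throws p). \<exists>i. k \<le> load \<omega> N i}"
    by (intro finite_measure_mono sets_throws_load) (auto simp: not_less)
  also have "\<dots> = measure (throws p) {\<omega> \<in> space (throws p).
      \<exists>n. hit_time k \<omega> = enat n \<and> real n \<le> c * (real k / \<sigma>)}"
    using hit_time_le_iff[of "c * (real k / \<sigma>)" k] assms(3) \<open>0 < \<sigma>\<close>
    by (simp add: N_def)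
  finally show ?thesis
    using F_le by (simp add: \<sigma>_def)
qed

theorem corollary5:
  fixes m k :: nat and p :: "nat pmf" and \<delta> :: real
  assumes "m \<ge> 2" and "set_pmf p \<subseteq> {1..m}" and "k \<ge> 1"
    and "0 < \<delta>" and "\<delta> < 1"
  defines "nstar \<equiv> real k / (\<Sum>i=1..m. pmf p i ^ k) powr (1 / real k)"
  shows "measure (throws p) {\<omega> \<in> space (throws p).
            \<exists>n. hit_time k \<omega> = enat n \<and> real n \<le> (\<delta> / exp 1) * nstar} \<le> \<delta> \<and>
         measure (throws p) {\<omega> \<in> space (throws p).
            \<exists>n. hit_time k \<omega> = enat n \<and> real n \<le> max (exp 2) (2 * ln (1 / \<delta>)) * nstar}
           \<ge> 1 - \<delta>"
proof
  have finite: "finite (set_pmf p)"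
    using assms(2) finite_subset by blast
  have "(\<Sum>i=1..m. pmf p i ^ k) = (\<Sum>i\<in>set_pmf p. pmf p i ^ k)"
    using assms(2,3) by (intro sum.mono_neutral_right) (auto simp: set_pmf_iff)
  then have nstar: "nstar = real k / pmf_norm p k"
    by (simp add: nstar_def pmf_norm_def)
  have "\<delta> ^ k \<le> \<delta>"
    using power_decreasing[of 1 k \<delta>] assms(3-5) by simp
  then show "measure (throws p) {\<omega> \<in> space (throws p).
      \<exists>n. hit_time k \<omega> = enat n \<and> real n \<le> (\<delta> / exp 1) * nstar} \<le> \<delta>"
    using hit_time_lower_tail[OF finite assms(3), of \<delta>] assms(4) by (simp add: nstar)
  define c where "c = max (exp 2) (2 * ln (1 / \<delta>))"
  have "7 \<le> c"
    using seven_le_exp_2 by (simp add: c_def)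
  have "exp (- c / 2) \<le> exp (- ln (1 / \<delta>))"
    by (simp add: c_def)
  also have "\<dots> = \<delta>"
    using assms(4) by (simp add: ln_div)
  finally show "1 - \<delta> \<le> measure (throws p) {\<omega> \<in> space (throws p).
      \<exists>n. hit_time k \<omega> = enat n \<and> real n \<le> max (exp 2) (2 * ln (1 / \<delta>)) * nstar}"
    using hit_time_upper_tail[OF finite assms(3) \<open>7 \<le> c\<close>] by (simp add: c_def nstar)
qed

end
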